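(* Let $S$ be the Hilbert system whose theorems are obtained, by closing under modus ponens, from all instances of schemas (1)–(8) and (10)–(12) of $C_1$ (that is, all axiom schemas of $C_1$ except the excluded middle schema (9)) together with all instances of the explosion schema $A\to(\neg A\to B)$. Then for a propositional variable $p$, the formula $p\vee\neg p$ is not a theorem of $S$. In other words, in $C_1$ extended by the explosion schema, the excluded middle schema cannot be deleted.
   Context: Formulas are built from propositional variables using the binary connectives $\to,\wedge,\vee$ and the unary connective $\neg$. For a formula $A$, write $A^{\circ}$ for $\neg(A\wedge\neg A)$. da Costa's logic $C_1$ is the Hilbert system whose theorems are obtained from all instances, for arbitrary formulas $A,B,C$, of the following axiom schemas by closing under modus ponens (from $A$ and $A\to B$ infer $B$): (1) $A\to(B\to A)$; (2) $(A\to B)\to((A\to(B\to C))\to(A\to C))$; (3) $(A\wedge B)\to A$; (4) $(A\wedge B)\to B$; (5) $A\to(B\to(A\wedge B))$; (6) $A\to(A\vee B)$; (7) $B\to(A\vee B)$; (8) $(A\to C)\to((B\to C)\to((A\vee B)\to C))$; (9) $A\vee\neg A$ (excluded middle); (10) $\neg\neg A\to A$; (11) $B^{\circ}\to((A\to B)\to((A\to\neg B)\to\neg A))$; (12) $(A^{\circ}\wedge B^{\circ})\to(A\wedge B)^{\circ}$, $(A^{\circ}\wedge B^{\circ})\to(A\vee B)^{\circ}$, and $(A^{\circ}\wedge B^{\circ})\to(A\to B)^{\circ}$. *)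

theory Defs
  imports Main
begin

datatype form =
    Var nat
  | Imp form form
  | Conj form form
  | Disj form form
  | Neg form

definition circ :: "form \<Rightarrow> form" where
  "circ A = Neg (Conj A (Neg A))"

inductive C1_axiom_no_em :: "form \<Rightarrow> bool" where
  ax1: "C1_axiom_no_em (Imp A (Imp B A))"
| ax2: "C1_axiom_no_em (Imp (Imp A B) (Imp (Imp A (Imp B C)) (Imp A C)))"
| ax3: "C1_axiom_no_em (Imp (Conj A B) A)"
| ax4: "C1_axiom_no_em (Imp (Conj A B) B)"
| ax5: "C1_axiom_no_em (Imp A (Imp B (Conj A B)))"
| ax6: "C1_axiom_no_em (Imp A (Disj A B))"
| ax7: "C1_axiom_no_em (Imp B (Disj A B))"
| ax8: "C1_axiom_no_em (Imp (Imp A C) (Imp (Imp B C) (Imp (Disj A B) C)))"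
| ax10: "C1_axiom_no_em (Imp (Neg (Neg A)) A)"
| ax11: "C1_axiom_no_em (Imp (circ B) (Imp (Imp A B) (Imp (Imp A (Neg B)) (Neg A))))"
| ax12a: "C1_axiom_no_em (Imp (Conj (circ A) (circ B)) (circ (Conj A B)))"
| ax12b: "C1_axiom_no_em (Imp (Conj (circ A) (circ B)) (circ (Disj A B)))"
| ax12c: "C1_axiom_no_em (Imp (Conj (circ A) (circ B)) (circ (Imp A B)))"

inductive S_thm :: "form \<Rightarrow> bool" where
  axiom: "C1_axiom_no_em A \<Longrightarrow> S_thm A"
| explosion: "S_thm (Imp A (Imp (Neg A) B))"
| mp: "S_thm A \<Longrightarrow> S_thm (Imp A B) \<Longrightarrow> S_thm B"

end

theory Submission
  imports Defs
begin

text \<open>Interpret the positive connectives classically but every negation as constant falsity.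
All axioms of S, explosion included, are true under this reading and modus ponens preserves truth,
yet \<open>p \<or> \<not>p\<close> collapses to \<open>p\<close>, which fails when \<open>p\<close> is false.\<close>

fun eval_neg_false :: "(nat \<Rightarrow> bool) \<Rightarrow> form \<Rightarrow> bool" where
  "eval_neg_false v (Var n) = v n"
| "eval_neg_false v (Imp A B) = (eval_neg_false v A \<longrightarrow> eval_neg_false v B)"
| "eval_neg_false v (Conj A B) = (eval_neg_false v A \<and> eval_neg_false v B)"
| "eval_neg_false v (Disj A B) = (eval_neg_false v A \<or> eval_neg_false v B)"
| "eval_neg_false v (Neg A) = False"

lemma C1_axiom_no_em_eval_neg_false: "C1_axiom_no_em A \<Longrightarrow> eval_neg_false v A"
  by (induction rule: C1_axiom_no_em.induct) (auto simp: circ_def)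

lemma S_thm_eval_neg_false: "S_thm A \<Longrightarrow> eval_neg_false v A"
  by (induction rule: S_thm.induct) (auto simp: C1_axiom_no_em_eval_neg_false)

theorem mainTheorem3:
  shows "\<not> S_thm (Disj (Var p) (Neg (Var p)))"
proof
  assume "S_thm (Disj (Var p) (Neg (Var p)))"
  then have "eval_neg_false (\<lambda>_. False) (Disj (Var p) (Neg (Var p)))"
    by (rule S_thm_eval_neg_false)
  then show False by simp
qed

end
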